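(* Fix bidder $i$, $v_{-i}$ and $\Delta>0$. Let $x^*,x$ be allocation rules such that $k\mapsto x^*_i(z_{i,k},v_{-i})$ and $k\mapsto x_i(z_{i,k},v_{-i})$ are non-decreasing and $|x^*_i(z_{i,j},v_{-i})-x_i(z_{i,j},v_{-i})|\le\Delta$ for all $j$. Let $p^*_i=\sqrt{q^*_i}$ and $p_i=\sqrt{q_i}$ where $q^*_i,q_i$ are given by the payment formula $q_i(z_{i,\ell},v_{-i})=z_{i,\ell}x_i(z_{i,\ell},v_{-i})-\sum_{j=1}^{\ell-1}(z_{i,j+1}-z_{i,j})x_i(z_{i,j},v_{-i})$ (likewise for $x^*$). Then $$\Big|\sum_{k=1}^{K_i}f_{i,k}\big(p^*_i(z_{i,k},v_{-i})-p_i(z_{i,k},v_{-i})\big)\Big|\le\sqrt{2\Delta\,(2z_{i,K_i}-z_{i,1})},$$ in particular it is $O(\sqrt{\Delta})$.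
   Context: Bidder $i$'s type space is $V_i=\{z_{i,1}<\dots<z_{i,K_i}\}\subset[0,\infty)$ with pmf $f_{i,k}$; allocations lie in $[0,1]$. (Under monotonicity the payment-formula values are nonnegative, so the square roots are defined.) *)

theory Defs
  imports "HOL-Analysis.Analysis"
begin

text \<open>Payment formula for a single bidder with v_{-i} fixed. Types indexed 1..K
  by z : nat => real; allocation x : nat => real gives x_i(z_{i,k}, v_{-i}) at index k.
  q(l) = z_l x_l - sum_{j=1}^{l-1} (z_{j+1} - z_j) x_j.\<close>
definition payment :: "(nat \<Rightarrow> real) \<Rightarrow> (nat \<Rightarrow> real) \<Rightarrow> nat \<Rightarrow> real" where
  "payment z x l = z l * x l - (\<Sum>j=1..<l. (z (Suc j) - z j) * x j)"

end

theory Submission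
  imports Defs
begin

text \<open>The payment formula is linear in the allocation, so the payment difference is the
  payment of the allocation difference; its modulus is at most \<open>\<Delta> (2 z\<^sub>k - z\<^sub>1)\<close> since
  the increments of \<open>z\<close> telescope. Monotone allocations have nonnegative payments, and
  \<open>\<bar>\<surd>a - \<surd>b\<bar> \<le> \<surd>\<bar>a - b\<bar>\<close> then bounds every term of the average, hence the average.\<close>

lemma mono_from_steps:
  fixes z :: "nat \<Rightarrow> real"
  assumes "\<And>k. 1 \<le> k \<Longrightarrow> k < K \<Longrightarrow> z k \<le> z (Suc k)"
    and "1 \<le> j" "j \<le> k" "k \<le> K"
  shows "z j \<le> z k"
  using assms(3,4)
proof (induction k rule: dec_induct)
  case (step k)
  then show ?case using assms(1)[of k] assms(2) by linarith
qed simp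

lemma abs_sqrt_diff_le_sqrt_abs_diff:
  fixes a b :: real
  assumes "0 \<le> a" "0 \<le> b"
  shows "\<bar>sqrt a - sqrt b\<bar> \<le> sqrt \<bar>a - b\<bar>"
proof -
  have le: "sqrt u - sqrt v \<le> sqrt \<bar>u - v\<bar>" if "0 \<le> u" "0 \<le> v" for u v :: real
  proof (cases "v \<le> u")
    case True
    then have "sqrt u \<le> sqrt v + sqrt (u - v)"
      using sqrt_add_le_add_sqrt[of v "u - v"] that by simp
    with True show ?thesis by simp
  next
    case False
    then have "sqrt u \<le> sqrt v" by simp
    then show ?thesis using real_sqrt_ge_zero[of "\<bar>u - v\<bar>"] by linarith
  qed
  show ?thesis
    using le[OF assms] le[OF assms(2,1)] by (simp add: abs_minus_commute abs_le_iff)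
qed

lemma abs_weighted_average_le:
  fixes f d :: "nat \<Rightarrow> real"
  assumes "\<And>k. k \<in> A \<Longrightarrow> 0 \<le> f k" "sum f A = 1"
    and "\<And>k. k \<in> A \<Longrightarrow> \<bar>d k\<bar> \<le> M"
  shows "\<bar>\<Sum>k\<in>A. f k * d k\<bar> \<le> M"
proof -
  have "\<bar>\<Sum>k\<in>A. f k * d k\<bar> \<le> (\<Sum>k\<in>A. f k * \<bar>d k\<bar>)"
    using sum_abs[of "\<lambda>k. f k * d k" A] assms(1) by (simp add: abs_mult)
  also have "\<dots> \<le> (\<Sum>k\<in>A. f k * M)"
    by (intro sum_mono mult_left_mono) (use assms in auto)
  also have "\<dots> = M"
    using assms(2) by (simp add: sum_distrib_right[symmetric])
  finally show ?thesis .
qed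

lemma payment_diff:
  "payment z x k - payment z y k = payment z (\<lambda>j. x j - y j) k"
proof -
  have "(\<Sum>j=1..<k. (z (Suc j) - z j) * (x j - y j))
      = (\<Sum>j=1..<k. (z (Suc j) - z j) * x j) - (\<Sum>j=1..<k. (z (Suc j) - z j) * y j)"
    by (simp add: right_diff_distrib sum_subtractf)
  then show ?thesis unfolding payment_def by (simp add: algebra_simps)
qed

lemma payment_nonneg:
  assumes "1 \<le> l" "0 \<le> z 1"
    and z_steps: "\<And>j. 1 \<le> j \<Longrightarrow> j < l \<Longrightarrow> z j \<le> z (Suc j)"
    and "0 \<le> y l" and y_le: "\<And>j. 1 \<le> j \<Longrightarrow> j < l \<Longrightarrow> y j \<le> y l"
  shows "0 \<le> payment z y l"
proof -
  have "(\<Sum>j=1..<l. (z (Suc j) - z j) * y j) \<le> (\<Sum>j=1..<l. (z (Suc j) - z j) * y l)"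
    by (intro sum_mono mult_left_mono) (use z_steps y_le in auto)
  also have "\<dots> = (z l - z 1) * y l"
    using sum_Suc_diff'[of 1 l z] assms(1) by (simp add: sum_distrib_right[symmetric])
  finally show ?thesis
    using mult_nonneg_nonneg[OF assms(2,4)] unfolding payment_def by (simp add: algebra_simps)
qed

lemma abs_payment_le:
  assumes "1 \<le> k" "0 \<le> z k"
    and z_steps: "\<And>j. 1 \<le> j \<Longrightarrow> j < k \<Longrightarrow> z j \<le> z (Suc j)"
    and y_bound: "\<And>j. 1 \<le> j \<Longrightarrow> j \<le> k \<Longrightarrow> \<bar>y j\<bar> \<le> \<Delta>"
  shows "\<bar>payment z y k\<bar> \<le> \<Delta> * (2 * z k - z 1)"
proof -
  have "\<bar>\<Sum>j=1..<k. (z (Suc j) - z j) * y j\<bar> \<le> (\<Sum>j=1..<k. (z (Suc j) - z j) * \<Delta>)"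
    using sum_abs[of "\<lambda>j. (z (Suc j) - z j) * y j" "{1..<k}"]
      sum_mono[of "{1..<k}" "\<lambda>j. \<bar>(z (Suc j) - z j) * y j\<bar>" "\<lambda>j. (z (Suc j) - z j) * \<Delta>"]
      z_steps y_bound
    by (force simp: abs_mult intro: mult_left_mono)
  also have "\<dots> = (z k - z 1) * \<Delta>"
    using sum_Suc_diff'[of 1 k z] assms(1) by (simp add: sum_distrib_right[symmetric])
  finally have "\<bar>\<Sum>j=1..<k. (z (Suc j) - z j) * y j\<bar> \<le> (z k - z 1) * \<Delta>" .
  moreover have "\<bar>z k * y k\<bar> \<le> z k * \<Delta>"
    using y_bound[of k] assms(1,2) by (simp add: abs_mult mult_left_mono)
  ultimately show ?thesis
    unfolding payment_def by (simp add: algebra_simps)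
qed

theorem mainTheorem15:
  fixes K :: nat and z f xs x :: "nat \<Rightarrow> real" and \<Delta> :: real
  assumes K: "K \<ge> 1"
    and z_nonneg: "z 1 \<ge> 0"
    and z_strict: "\<And>k. 1 \<le> k \<Longrightarrow> k < K \<Longrightarrow> z k < z (Suc k)"
    and f_nonneg: "\<And>k. 1 \<le> k \<Longrightarrow> k \<le> K \<Longrightarrow> f k \<ge> 0"
    and f_sum: "(\<Sum>k=1..K. f k) = 1"
    and xs_range: "\<And>k. 1 \<le> k \<Longrightarrow> k \<le> K \<Longrightarrow> 0 \<le> xs k \<and> xs k \<le> 1"
    and x_range: "\<And>k. 1 \<le> k \<Longrightarrow> k \<le> K \<Longrightarrow> 0 \<le> x k \<and> x k \<le> 1"
    and xs_mono: "\<And>j k. 1 \<le> j \<Longrightarrow> j \<le> k \<Longrightarrow> k \<le> K \<Longrightarrow> xs j \<le> xs k"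
    and x_mono: "\<And>j k. 1 \<le> j \<Longrightarrow> j \<le> k \<Longrightarrow> k \<le> K \<Longrightarrow> x j \<le> x k"
    and Delta_pos: "\<Delta> > 0"
    and close: "\<And>j. 1 \<le> j \<Longrightarrow> j \<le> K \<Longrightarrow> \<bar>xs j - x j\<bar> \<le> \<Delta>"
  shows "\<bar>\<Sum>k=1..K. f k * (sqrt (payment z xs k) - sqrt (payment z x k))\<bar>
           \<le> sqrt (2 * \<Delta> * (2 * z K - z 1))"
proof (rule abs_weighted_average_le)
  have z_steps: "\<And>k. 1 \<le> k \<Longrightarrow> k < K \<Longrightarrow> z k \<le> z (Suc k)"
    using z_strict less_imp_le by blast
  note z_mono = mono_from_steps[where z = z and K = K, OF z_steps]
  fix k assume "k \<in> {1..K}"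
  then have k: "1 \<le> k" "k \<le> K" by auto
  have "0 \<le> payment z xs k" "0 \<le> payment z x k"
    using k z_nonneg z_steps xs_range xs_mono x_range x_mono
    by (intro payment_nonneg; force)+
  then have "\<bar>sqrt (payment z xs k) - sqrt (payment z x k)\<bar>
      \<le> sqrt \<bar>payment z (\<lambda>j. xs j - x j) k\<bar>"
    using abs_sqrt_diff_le_sqrt_abs_diff payment_diff by metis
  also have "\<dots> \<le> sqrt (\<Delta> * (2 * z k - z 1))"
    using k z_nonneg z_mono[of 1 k] z_steps close
    by (intro real_sqrt_le_mono abs_payment_le) auto
  also have "\<dots> \<le> sqrt (2 * \<Delta> * (2 * z K - z 1))"
    using k z_nonneg z_mono[of 1 k] z_mono[of k K] Delta_pos
    by (intro real_sqrt_le_mono) (simp add: mult_left_mono)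
  finally show "\<bar>sqrt (payment z xs k) - sqrt (payment z x k)\<bar>
      \<le> sqrt (2 * \<Delta> * (2 * z K - z 1))" .
qed (use f_nonneg f_sum in auto)

end
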